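(* Let $\mathcal{H}$ be a Hilbert space of finite dimension $d$, let $\mathcal{Z}$ be a finite set, let $\{p_z\}_{z\in\mathcal{Z}}$ be a fixed probability distribution on $\mathcal{Z}$, let $A^{(i)}_z$ ($i=1,\dots,R$, $z\in\mathcal{Z}$) be Hermitian operators on $\mathcal{H}$, and let $b_1,\dots,b_R\in\mathbb{R}$. Define the feasible set $$\mathcal{K}=\Big\{\textstyle\bigoplus_{z\in\mathcal{Z}}\rho_z \;\Big|\; \rho_z\in\mathcal{D}\ \forall z\in\mathcal{Z},\ \ \sum_{z\in\mathcal{Z}}p_z\operatorname{Tr}[A^{(i)}_z\rho_z]=b_i\ \ \forall i\in\{1,\dots,R\}\Big\},$$ viewed as a convex subset of the real vector space $\mathcal{M}=\bigoplus_{z\in\mathcal{Z}}\mathcal{B}(\mathcal{H})$ of block-diagonal matrices. Then every extreme point $\bigoplus_z\rho_z$ of $\mathcal{K}$ has at most $R$ blocks $\rho_z$ that are not pure states (i.e. at most $R$ labels $z$ for which $\rho_z$ is not of the form $|\phi\rangle\langle\phi|$).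
   Context: $\mathcal{D}$ denotes the set of density matrices on $\mathcal{H}$ (Hermitian, positive semi-definite, unit trace operators). An element $\bigoplus_z\rho_z$ is a collection of conditional states, one per label $z$, representing a quantum state ensemble $\{(p_z,\rho_z)\}$ with the probabilities $p_z$ held fixed. An extreme point of a convex set is an element that cannot be written as $\lambda x'+(1-\lambda)x''$ with $\lambda\in(0,1)$ and $x',x''$ in the set unless $x'=x''=x$. *)

theory Defs
  imports "HOL-Analysis.Analysis"
begin

text \<open>Operators on a d-dimensional Hilbert space are complex d x d matrices,
  with d = CARD('n) for a finite index type 'n.\<close>

definition conj_transpose :: "complex^'n^'m \<Rightarrow> complex^'m^'n" where
  "conj_transpose A = (\<chi> i j. cnj (A $ j $ i))"

definition hermitian :: "complex^'n^'n \<Rightarrow> bool" where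
  "hermitian A \<longleftrightarrow> conj_transpose A = A"

definition qform :: "complex^'n^'n \<Rightarrow> complex^'n \<Rightarrow> complex" where
  "qform A v = (\<Sum>i\<in>UNIV. cnj (v $ i) * (A *v v) $ i)"

definition psd :: "complex^'n^'n \<Rightarrow> bool" where
  "psd A \<longleftrightarrow> hermitian A \<and> (\<forall>v. 0 \<le> Re (qform A v))"

definition density :: "complex^'n^'n \<Rightarrow> bool" where
  "density \<rho> \<longleftrightarrow> hermitian \<rho> \<and> psd \<rho> \<and> trace \<rho> = 1"

definition ketbra :: "complex^'n \<Rightarrow> complex^'n^'n" where
  "ketbra \<phi> = (\<chi> i j. \<phi> $ i * cnj (\<phi> $ j))"

definition pure_state :: "complex^'n^'n \<Rightarrow> bool" where
  "pure_state \<rho> \<longleftrightarrow> (\<exists>\<phi>. \<rho> = ketbra \<phi>)"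

definition feasible ::
  "('z::finite \<Rightarrow> real) \<Rightarrow> (nat \<Rightarrow> 'z \<Rightarrow> complex^'n^'n) \<Rightarrow> (nat \<Rightarrow> real) \<Rightarrow> nat
     \<Rightarrow> ('z \<Rightarrow> complex^'n^'n) set" where
  "feasible p A b R = {\<rho>. (\<forall>z. density (\<rho> z)) \<and>
      (\<forall>i\<in>{1..R}. (\<Sum>z\<in>UNIV. complex_of_real (p z) * trace (A i z ** \<rho> z))
                    = complex_of_real (b i))}"

text \<open>Extreme point of a set of block-diagonal operators (real convex combinations,
  taken blockwise).\<close>
definition extreme_pt :: "('z \<Rightarrow> complex^'n^'n) set \<Rightarrow> ('z \<Rightarrow> complex^'n^'n) \<Rightarrow> bool" where
  "extreme_pt K x \<longleftrightarrow> x \<in> K \<and>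
     (\<forall>x1\<in>K. \<forall>x2\<in>K. \<forall>l::real. 0 < l \<and> l < 1 \<and>
        (\<forall>z. x z = l *\<^sub>R x1 z + (1 - l) *\<^sub>R x2 z) \<longrightarrow> x1 = x \<and> x2 = x)"

end

theory Submission
  imports Defs
begin

(*
  A density matrix rho that is not pure can be moved in two opposite directions inside the
  set of density matrices: if r = rho_kk > 0 and a is the k-th column of rho, then
  P = |a><a| / r and D = rho - P are positive semidefinite (a Schur complement argument),
  D is nonzero because rho is not pure, and H = tr(D) P - tr(P) D is a nonzero traceless
  Hermitian matrix with rho + H and rho - H positive semidefinite.
  If more than R blocks of rho were not pure, the R real linear constraints on the
  coefficients c_z of the perturbations c_z H_z would have a nontrivial solution, which can
  be normalized to |c_z| <= 1; then rho is the midpoint of two distinct points of K.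
*)

lemma hermitian_add: "hermitian A \<Longrightarrow> hermitian B \<Longrightarrow> hermitian (A + B)"
  by (simp add: hermitian_def conj_transpose_def vec_eq_iff)

lemma hermitian_diff: "hermitian A \<Longrightarrow> hermitian B \<Longrightarrow> hermitian (A - B)"
  by (simp add: hermitian_def conj_transpose_def vec_eq_iff)

lemma hermitian_scaleR: "hermitian A \<Longrightarrow> hermitian (r *\<^sub>R A)"
  by (simp add: hermitian_def conj_transpose_def vec_eq_iff)

lemma hermitian_ketbra: "hermitian (ketbra a)"
  by (simp add: hermitian_def conj_transpose_def vec_eq_iff ketbra_def mult.commute)

lemma hermitian_entry: "hermitian A \<Longrightarrow> A $ j $ i = cnj (A $ i $ j)"
  by (auto simp: hermitian_def conj_transpose_def vec_eq_iff)

lemma hermitian_diag_real: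
  assumes "hermitian A"
  shows "A $ i $ i = of_real (Re (A $ i $ i))"
proof -
  have "A $ i $ i \<in> \<real>"
    unfolding Reals_cnj_iff by (rule hermitian_entry[OF assms, symmetric])
  then show ?thesis
    by (simp add: of_real_Re)
qed

lemma trace_hermitian_real: "hermitian A \<Longrightarrow> trace A = of_real (Re (trace A))"
  unfolding trace_def by (subst (1) hermitian_diag_real) (simp_all add: Re_sum)

lemma trace_mult_hermitian_real:
  assumes "hermitian A" "hermitian B"
  shows "trace (A ** B) = of_real (Re (trace (A ** B)))"
proof -
  have "cnj (trace (A ** B)) = trace (B ** A)"
    unfolding trace_def matrix_matrix_mult_def
    using hermitian_entry[OF assms(1), symmetric] hermitian_entry[OF assms(2), symmetric]
    by (simp add: mult.commute)
  also have "\<dots> = trace (A ** B)"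
    by (rule trace_mul_sym[symmetric])
  finally have "trace (A ** B) \<in> \<real>"
    unfolding Reals_cnj_iff .
  then show ?thesis
    by (simp add: of_real_Re)
qed

lemma trace_scaleR: "trace (r *\<^sub>R (A::complex^'n^'n)) = r *\<^sub>R trace A"
  by (simp add: trace_def scaleR_sum_right)

lemma trace_mult_scaleR: "trace (A ** (r *\<^sub>R B)) = r *\<^sub>R trace (A ** (B::complex^'n^'n))"
  by (simp add: trace_def matrix_matrix_mult_def scaleR_sum_right)

lemma qform_add: "qform (A + B) v = qform A v + qform B v"
  by (simp add: qform_def matrix_vector_mult_def sum.distrib ring_distribs)

lemma qform_diff: "qform (A - B) v = qform A v - qform B v"
  by (simp add: qform_def matrix_vector_mult_def sum_subtractf ring_distribs)

lemma qform_scaleR: "qform (r *\<^sub>R A) v = of_real r * qform A v"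
  by (simp add: qform_def matrix_vector_mult_def sum_distrib_left
      scaleR_conv_of_real[symmetric] algebra_simps)

lemma psd_hermitian: "psd A \<Longrightarrow> hermitian A"
  by (simp add: psd_def)

lemma psd_add: "psd A \<Longrightarrow> psd B \<Longrightarrow> psd (A + B)"
  by (simp add: psd_def hermitian_add qform_add)

lemma psd_scaleR: "psd A \<Longrightarrow> 0 \<le> r \<Longrightarrow> psd (r *\<^sub>R A)"
  by (simp add: psd_def hermitian_scaleR qform_scaleR)

lemma matrix_vector_mult_axis: "(A *v axis k t) $ i = A $ i $ k * t"
  by (simp add: matrix_vector_mult_def axis_def if_distrib cong: if_cong)

lemma qform_add_axis:
  "qform A (v + axis k t) = qform A v + t * (\<Sum>i\<in>UNIV. cnj (v $ i) * A $ i $ k)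
     + cnj t * (A *v v) $ k + cnj t * t * A $ k $ k"
proof -
  have "qform A (v + axis k t)
      = (\<Sum>i\<in>UNIV. cnj (v $ i + axis k t $ i) * ((A *v v) $ i + A $ i $ k * t))"
    unfolding qform_def by (simp add: matrix_vector_right_distrib matrix_vector_mult_axis)
  also have "\<dots> = (\<Sum>i\<in>UNIV. cnj (v $ i) * (A *v v) $ i + t * (cnj (v $ i) * A $ i $ k)
       + (if i = k then cnj t * (A *v v) $ k + cnj t * t * A $ k $ k else 0))"
    by (rule sum.cong) (auto simp: axis_def algebra_simps)
  finally show ?thesis
    by (simp add: sum.distrib sum_distrib_left qform_def)
qed

lemma qform_axis: "qform A (axis k 1) = A $ k $ k"
  using qform_add_axis[of A 0 k 1] by (simp add: qform_def)

lemma psd_diag_nonneg: "psd A \<Longrightarrow> 0 \<le> Re (A $ k $ k)"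
  by (metis psd_def qform_axis)

lemma psd_trace_nonneg: "psd A \<Longrightarrow> 0 \<le> Re (trace A)"
  by (simp add: trace_def Re_sum sum_nonneg psd_diag_nonneg)

lemma qform_ketbra:
  "qform (ketbra a) v = cnj (\<Sum>j\<in>UNIV. cnj (a $ j) * v $ j) * (\<Sum>j\<in>UNIV. cnj (a $ j) * v $ j)"
proof -
  have "qform (ketbra a) v = (\<Sum>i\<in>UNIV. cnj (v $ i) * a $ i * (\<Sum>j\<in>UNIV. cnj (a $ j) * v $ j))"
    unfolding qform_def matrix_vector_mult_def ketbra_def
    by (simp add: sum_distrib_left mult_ac)
  then show ?thesis
    by (simp add: sum_distrib_right mult_ac)
qed

lemma Re_cnj_mult_self: "Re (cnj z * z) = (cmod z)\<^sup>2"
  by (metis Re_complex_of_real complex_norm_square mult.commute)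

lemma psd_ketbra: "psd (ketbra a)"
  unfolding psd_def qform_ketbra Re_cnj_mult_self by (simp add: hermitian_ketbra)

lemma ketbra_scaleR: "ketbra (c *\<^sub>R a) = (c * c) *\<^sub>R ketbra a"
  by (simp add: ketbra_def vec_eq_iff)

(* Minimizing the quadratic form along v + t e_k: the optimal t = -(A v)_k / A_kk. *)
lemma psd_Schur_bound:
  assumes "psd A" "A $ k $ k = of_real r" "r > 0"
  shows "(cmod ((A *v v) $ k))\<^sup>2 / r \<le> Re (qform A v)"
proof -
  define s where "s = (A *v v) $ k"
  define t where "t = - s / of_real r"
  have col: "(\<Sum>i\<in>UNIV. cnj (v $ i) * A $ i $ k) = cnj s"
    unfolding s_def matrix_vector_mult_def
    by (simp add: hermitian_entry[OF psd_hermitian[OF assms(1)], of k] mult.commute)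
  have "qform A (v + axis k t) = qform A v + t * cnj s + cnj t * s + cnj t * t * of_real r"
    unfolding qform_add_axis col assms(2) s_def ..
  also have "\<dots> = qform A v - s * cnj s / of_real r"
    using assms(3) by (simp add: t_def field_simps)
  also have "s * cnj s = of_real ((cmod s)\<^sup>2)"
    by (metis complex_norm_square of_real_power)
  finally have "qform A (v + axis k t) = qform A v - of_real ((cmod s)\<^sup>2 / r)"
    by simp
  moreover have "0 \<le> Re (qform A (v + axis k t))"
    using assms(1) by (simp add: psd_def)
  ultimately show ?thesis
    by (simp add: s_def)
qed

lemma psd_sub_column_ketbra:
  assumes "psd A" "A $ k $ k = of_real r" "r > 0"
  shows "psd (A - (1 / r) *\<^sub>R ketbra (\<chi> i. A $ i $ k))"
  unfolding psd_def
proof (intro conjI allI)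
  show "hermitian (A - (1 / r) *\<^sub>R ketbra (\<chi> i. A $ i $ k))"
    using assms(1) by (intro hermitian_diff hermitian_scaleR hermitian_ketbra psd_hermitian)
next
  fix v
  define a where "a = (\<chi> i. A $ i $ k)"
  have "(\<Sum>j\<in>UNIV. cnj (a $ j) * v $ j) = (A *v v) $ k"
    unfolding a_def matrix_vector_mult_def
    using hermitian_entry[OF psd_hermitian[OF assms(1)], of k, symmetric] by simp
  then have "Re (qform (ketbra a) v) = (cmod ((A *v v) $ k))\<^sup>2"
    unfolding qform_ketbra by (rule ssubst) (rule Re_cnj_mult_self)
  moreover have "Re (qform (A - (1 / r) *\<^sub>R ketbra a) v)
      = Re (qform A v) - (1 / r) * Re (qform (ketbra a) v)"
    by (simp add: qform_diff qform_scaleR)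
  ultimately show "0 \<le> Re (qform (A - (1 / r) *\<^sub>R ketbra a) v)"
    using psd_Schur_bound[OF assms] by simp
qed

definition admissible_perturbation :: "complex^'n^'n \<Rightarrow> complex^'n^'n \<Rightarrow> bool" where
  "admissible_perturbation \<rho> H \<longleftrightarrow>
     hermitian H \<and> trace H = 0 \<and> psd (\<rho> + H) \<and> psd (\<rho> - H)"

lemma admissible_perturbation_zero: "psd \<rho> \<Longrightarrow> admissible_perturbation \<rho> 0"
  by (simp add: admissible_perturbation_def hermitian_def conj_transpose_def vec_eq_iff trace_def)

lemma psd_add_scaleR_between:
  assumes "psd (A + H)" "psd (A - H)" "\<bar>t\<bar> \<le> 1"
  shows "psd (A + t *\<^sub>R H)"
proof -
  have "((1 + t) / 2) *\<^sub>R (A + H) + ((1 - t) / 2) *\<^sub>R (A - H)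
      = ((1 + t) / 2 + (1 - t) / 2) *\<^sub>R A + ((1 + t) / 2 - (1 - t) / 2) *\<^sub>R H"
    by (simp add: scaleR_add_right scaleR_diff_right scaleR_add_left scaleR_diff_left algebra_simps)
  also have "\<dots> = A + t *\<^sub>R H"
    by (simp flip: add_divide_distrib diff_divide_distrib)
  finally have "A + t *\<^sub>R H = ((1 + t) / 2) *\<^sub>R (A + H) + ((1 - t) / 2) *\<^sub>R (A - H)" ..
  moreover have "0 \<le> (1 + t) / 2" "0 \<le> (1 - t) / 2"
    using assms(3) by auto
  ultimately show ?thesis
    using assms(1,2) by (simp add: psd_add psd_scaleR)
qed

lemma admissible_perturbation_scaleR:
  assumes "admissible_perturbation \<rho> H" "\<bar>t\<bar> \<le> 1"
  shows "admissible_perturbation \<rho> (t *\<^sub>R H)"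
proof -
  have "psd (\<rho> + t *\<^sub>R H)" "psd (\<rho> - t *\<^sub>R H)"
    using assms psd_add_scaleR_between[of \<rho> H t] psd_add_scaleR_between[of \<rho> H "- t"]
    by (auto simp: admissible_perturbation_def)
  with assms show ?thesis
    by (simp add: admissible_perturbation_def hermitian_scaleR trace_scaleR)
qed

lemma density_add_admissible_perturbation:
  "density \<rho> \<Longrightarrow> admissible_perturbation \<rho> H \<Longrightarrow> density (\<rho> + H)"
  by (simp add: density_def admissible_perturbation_def psd_hermitian trace_add)

(* Since tr P + tr D = 1, both rho + H = (1 + tr D) P + (1 - tr P) D and
   rho - H = (1 - tr D) P + (1 + tr P) D are nonnegative combinations of P and D. *)
lemma admissible_perturbation_of_psd_split:
  assumes P: "psd P" and D: "psd D" and split: "\<rho> = P + D" and tr: "trace \<rho> = 1"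
  shows "admissible_perturbation \<rho> (Re (trace D) *\<^sub>R P - Re (trace P) *\<^sub>R D)"
proof -
  define \<alpha> where "\<alpha> = Re (trace D)"
  define \<beta> where "\<beta> = Re (trace P)"
  have trD: "trace D = of_real \<alpha>" and trP: "trace P = of_real \<beta>"
    unfolding \<alpha>_def \<beta>_def using trace_hermitian_real psd_hermitian P D by blast+
  have "of_real (\<alpha> + \<beta>) = (1::complex)"
    using tr trace_add[of P D] unfolding split trD trP by (simp add: add.commute)
  then have sum1: "\<alpha> + \<beta> = 1"
    using of_real_eq_1_iff by blast
  have nonneg: "0 \<le> \<alpha>" "0 \<le> \<beta>"
    unfolding \<alpha>_def \<beta>_def using P D by (simp_all add: psd_trace_nonneg)
  have "\<rho> + (\<alpha> *\<^sub>R P - \<beta> *\<^sub>R D) = (1 + \<alpha>) *\<^sub>R P + (1 - \<beta>) *\<^sub>R D"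
    "\<rho> - (\<alpha> *\<^sub>R P - \<beta> *\<^sub>R D) = (1 - \<alpha>) *\<^sub>R P + (1 + \<beta>) *\<^sub>R D"
    unfolding split by (simp_all add: algebra_simps)
  then have "psd (\<rho> + (\<alpha> *\<^sub>R P - \<beta> *\<^sub>R D))" "psd (\<rho> - (\<alpha> *\<^sub>R P - \<beta> *\<^sub>R D))"
    using P D sum1 nonneg by (simp_all add: psd_add psd_scaleR)
  moreover have "hermitian (\<alpha> *\<^sub>R P - \<beta> *\<^sub>R D)"
    using P D by (intro hermitian_diff hermitian_scaleR psd_hermitian)
  moreover have "trace (\<alpha> *\<^sub>R P - \<beta> *\<^sub>R D) = 0"
    by (simp add: trace_sub trace_scaleR trD trP) (simp add: scaleR_conv_of_real)
  ultimately show ?thesis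
    unfolding admissible_perturbation_def \<alpha>_def \<beta>_def by blast
qed

lemma nonpure_density_admissible_perturbation:
  assumes dens: "density \<rho>" and nonpure: "\<not> pure_state \<rho>"
  shows "\<exists>H. admissible_perturbation \<rho> H \<and> H \<noteq> 0"
proof -
  have psd: "psd \<rho>" and tr: "trace \<rho> = 1"
    using dens by (auto simp: density_def)
  have "\<exists>k. 0 < Re (\<rho> $ k $ k)"
  proof (rule ccontr)
    assume "\<not> ?thesis"
    then have "Re (trace \<rho>) \<le> 0"
      unfolding trace_def by (simp add: Re_sum sum_nonpos not_less)
    with tr show False
      by simp
  qed
  then obtain k where "0 < Re (\<rho> $ k $ k)"
    by blast
  define r where "r = Re (\<rho> $ k $ k)"
  have r: "r > 0" "\<rho> $ k $ k = of_real r"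
    using \<open>0 < Re (\<rho> $ k $ k)\<close> hermitian_diag_real[OF psd_hermitian[OF psd]]
    unfolding r_def by blast+
  define a where "a = (\<chi> i. \<rho> $ i $ k)"
  define P where "P = (1 / r) *\<^sub>R ketbra a"
  define D where "D = \<rho> - P"
  have \<rho>_eq: "\<rho> = P + D"
    by (simp add: D_def)
  have psdP: "psd P"
    unfolding P_def using r by (simp add: psd_scaleR psd_ketbra)
  have psdD: "psd D"
    unfolding D_def P_def a_def using psd_sub_column_ketbra[OF psd r(2,1)] .
  have "P $ k $ k = (1 / r) *\<^sub>R (\<rho> $ k $ k * cnj (\<rho> $ k $ k))"
    unfolding P_def ketbra_def a_def by simp
  then have Pkk: "P $ k $ k = of_real r"
    using r by (simp add: scaleR_conv_of_real)
  have Dkk: "D $ k $ k = 0"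
    unfolding D_def using Pkk r by simp
  have "D \<noteq> 0"
  proof
    assume "D = 0"
    then have "\<rho> = P"
      by (simp add: \<rho>_eq)
    also have "P = ketbra ((1 / sqrt r) *\<^sub>R a)"
      unfolding P_def ketbra_scaleR using r by (simp add: real_sqrt_mult[symmetric])
    finally show False
      using nonpure pure_state_def by blast
  qed
  define H where "H = Re (trace D) *\<^sub>R P - Re (trace P) *\<^sub>R D"
  have adm: "admissible_perturbation \<rho> H"
    unfolding H_def using psdP psdD \<rho>_eq tr by (rule admissible_perturbation_of_psd_split)
  have "H \<noteq> 0"
  proof
    assume H0: "H = 0"
    then have "(Re (trace D) *\<^sub>R P - Re (trace P) *\<^sub>R D) $ k $ k = 0"
      by (simp add: H_def)
    then have "Re (trace D) * r = 0"
      by (simp add: Pkk Dkk)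
    then have "Re (trace D) = 0"
      using r by simp
    moreover have "Re (trace P) = 1"
      using arg_cong[OF tr, of Re] \<open>Re (trace D) = 0\<close> by (simp add: \<rho>_eq trace_add)
    ultimately show False
      using H0 \<open>D \<noteq> 0\<close> by (simp add: H_def)
  qed
  with adm show ?thesis
    by blast
qed

lemma sum_pivot_elimination:
  fixes g :: "'a \<Rightarrow> nat \<Rightarrow> 'b::field"
  assumes "finite N" "z0 \<in> N"
  shows "(\<Sum>z\<in>N. (c(z0 := - (\<Sum>w\<in>N - {z0}. c w * g w j) / g z0 j)) z * g z i)
       = (\<Sum>z\<in>N - {z0}. c z * (g z i - g z j / g z0 j * g z0 i))"
proof -
  have "(\<Sum>z\<in>N. (c(z0 := - (\<Sum>w\<in>N - {z0}. c w * g w j) / g z0 j)) z * g z i)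
      = - (\<Sum>w\<in>N - {z0}. c w * g w j) / g z0 j * g z0 i + (\<Sum>z\<in>N - {z0}. c z * g z i)"
    using assms by (simp add: sum.remove)
  also have "\<dots> = (\<Sum>z\<in>N - {z0}. c z * (g z i - g z j / g z0 j * g z0 i))"
    by (simp add: sum_subtractf right_diff_distrib sum_distrib_right sum_divide_distrib
        mult.assoc times_divide_eq_right)
  finally show ?thesis .
qed

lemma homogeneous_system_nontrivial_solution:
  fixes g :: "'a \<Rightarrow> nat \<Rightarrow> 'b::field"
  assumes "finite N" "m < card N"
  shows "\<exists>c. (\<exists>z\<in>N. c z \<noteq> 0) \<and> (\<forall>i\<in>{1..m}. (\<Sum>z\<in>N. c z * g z i) = 0)"
  using assms
proof (induction m arbitrary: N g)
  case 0
  then obtain z where "z \<in> N"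
    by fastforce
  then show ?case
    by (intro exI[of _ "\<lambda>_. 1"]) auto
next
  case (Suc m)
  show ?case
  proof (cases "\<exists>z0\<in>N. g z0 (Suc m) \<noteq> 0")
    case False
    obtain c where "\<exists>z\<in>N. c z \<noteq> 0" "\<forall>i\<in>{1..m}. (\<Sum>z\<in>N. c z * g z i) = 0"
      using Suc.IH[of N g] Suc.prems by auto
    with False show ?thesis
      by (auto simp: atLeastAtMostSuc_conv)
  next
    case True
    then obtain z0 where z0: "z0 \<in> N" "g z0 (Suc m) \<noteq> 0"
      by blast
    define g' where "g' z i = g z i - g z (Suc m) / g z0 (Suc m) * g z0 i" for z i
    have "m < card (N - {z0})"
      using Suc.prems z0(1) by simp
    then obtain c where c: "\<exists>z\<in>N - {z0}. c z \<noteq> 0"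
      "\<forall>i\<in>{1..m}. (\<Sum>z\<in>N - {z0}. c z * g' z i) = 0"
      using Suc.IH[of "N - {z0}" g'] Suc.prems(1) by blast
    define c' where "c' = c(z0 := - (\<Sum>w\<in>N - {z0}. c w * g w (Suc m)) / g z0 (Suc m))"
    have elim: "(\<Sum>z\<in>N. c' z * g z i) = (\<Sum>z\<in>N - {z0}. c z * g' z i)" for i
      unfolding c'_def g'_def using Suc.prems(1) z0(1) by (rule sum_pivot_elimination)
    have "g' z (Suc m) = 0" for z
      using z0(2) by (simp add: g'_def)
    then have "\<forall>i\<in>{1..Suc m}. (\<Sum>z\<in>N. c' z * g z i) = 0"
      using c(2) by (simp add: elim atLeastAtMostSuc_conv)
    moreover have "\<exists>z\<in>N. c' z \<noteq> 0"
      using c(1) by (auto simp: c'_def)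
    ultimately show ?thesis
      by blast
  qed
qed

lemma homogeneous_system_bounded_solution:
  fixes g :: "'a \<Rightarrow> nat \<Rightarrow> real"
  assumes "finite N" "m < card N"
  shows "\<exists>c. (\<exists>z\<in>N. c z \<noteq> 0) \<and> (\<forall>z. \<bar>c z\<bar> \<le> 1) \<and>
    (\<forall>i\<in>{1..m}. (\<Sum>z\<in>N. c z * g z i) = 0)"
proof -
  obtain c z1 where c: "z1 \<in> N" "c z1 \<noteq> 0" "\<forall>i\<in>{1..m}. (\<Sum>z\<in>N. c z * g z i) = 0"
    using homogeneous_system_nontrivial_solution[OF assms] by blast
  define M where "M = Max ((\<lambda>z. \<bar>c z\<bar>) ` N)"
  have le_M: "\<bar>c z\<bar> \<le> M" if "z \<in> N" for z
    unfolding M_def using assms(1) that by simp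
  then have "M > 0"
    using c(1,2) by force
  define d where "d z = (if z \<in> N then c z / M else 0)" for z
  have "\<bar>d z\<bar> \<le> 1" for z
    using le_M \<open>M > 0\<close> by (simp add: d_def abs_div)
  moreover have "(\<Sum>z\<in>N. d z * g z i) = (\<Sum>z\<in>N. c z * g z i) / M" for i
    by (simp add: d_def sum_divide_distrib)
  ultimately show ?thesis
    using c \<open>M > 0\<close> by (intro exI[of _ d]) (auto simp: d_def)
qed

lemma extreme_pt_symmetric_perturbation:
  assumes "extreme_pt K x" "(\<lambda>z. x z + y z) \<in> K" "(\<lambda>z. x z - y z) \<in> K"
  shows "y z = 0"
proof -
  have extremality: "\<And>x1 x2 l. x1 \<in> K \<Longrightarrow> x2 \<in> K \<Longrightarrow> 0 < l \<Longrightarrow> l < (1::real) \<Longrightarrow>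
      (\<forall>z. x z = l *\<^sub>R x1 z + (1 - l) *\<^sub>R x2 z) \<Longrightarrow> x1 = x"
    using assms(1) unfolding extreme_pt_def by blast
  have "(\<lambda>z. x z + y z) = x"
    by (rule extremality[OF assms(2,3), of "1 / 2"])
      (simp_all add: algebra_simps flip: scaleR_add_left)
  then show ?thesis
    by (metis add_cancel_right_right)
qed

lemma feasible_add_admissible_perturbation:
  assumes "\<rho> \<in> feasible p A b R"
    and "\<And>z. admissible_perturbation (\<rho> z) (H z)"
    and "\<And>i. i \<in> {1..R} \<Longrightarrow> (\<Sum>z\<in>UNIV. of_real (p z) * trace (A i z ** H z)) = 0"
  shows "(\<lambda>z. \<rho> z + H z) \<in> feasible p A b R"
  using assms
  by (simp add: feasible_def density_add_admissible_perturbation matrix_add_ldistrib trace_add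
      ring_distribs sum.distrib)

lemma sum_weighted_trace_scaleR:
  fixes A H :: "'z::finite \<Rightarrow> complex^'n^'n"
  assumes "\<And>z. hermitian (A z)" "\<And>z. hermitian (H z)" "\<And>z. z \<notin> N \<Longrightarrow> H z = 0"
  shows "(\<Sum>z\<in>UNIV. of_real (p z) * trace (A z ** (c z *\<^sub>R H z)))
       = of_real (\<Sum>z\<in>N. c z * (p z * Re (trace (A z ** H z))))"
proof -
  have summand: "of_real (p z) * trace (A z ** (c z *\<^sub>R H z))
      = of_real (c z * (p z * Re (trace (A z ** H z))))" for z
  proof -
    define t where "t = Re (trace (A z ** H z))"
    have "trace (A z ** H z) = of_real t"
      unfolding t_def by (rule trace_mult_hermitian_real[OF assms(1,2)])
    then show ?thesis
      by (simp add: trace_mult_scaleR t_def[symmetric]) (simp add: scaleR_conv_of_real)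
  qed
  have "(\<Sum>z\<in>N. c z * (p z * Re (trace (A z ** H z))))
      = (\<Sum>z\<in>UNIV. c z * (p z * Re (trace (A z ** H z))))"
    using assms(3) by (intro sum.mono_neutral_left) (auto simp: trace_def)
  then show ?thesis
    by (simp add: summand)
qed

lemma feasible_add_scaled_perturbations:
  assumes "\<rho> \<in> feasible p A b R"
    and "\<And>i z. i \<in> {1..R} \<Longrightarrow> hermitian (A i z)"
    and "\<And>z. admissible_perturbation (\<rho> z) (H z)" "\<And>z. z \<notin> N \<Longrightarrow> H z = 0"
    and "\<And>z. \<bar>c z\<bar> \<le> 1"
    and "\<And>i. i \<in> {1..R} \<Longrightarrow> (\<Sum>z\<in>N. c z * (p z * Re (trace (A i z ** H z)))) = 0"
  shows "(\<lambda>z. \<rho> z + c z *\<^sub>R H z) \<in> feasible p A b R"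
proof (rule feasible_add_admissible_perturbation[OF assms(1)])
  show "admissible_perturbation (\<rho> z) (c z *\<^sub>R H z)" for z
    using assms(3,5) by (rule admissible_perturbation_scaleR)
  fix i
  assume "i \<in> {1..R}"
  then have "(\<Sum>z\<in>UNIV. of_real (p z) * trace (A i z ** (c z *\<^sub>R H z)))
      = of_real (\<Sum>z\<in>N. c z * (p z * Re (trace (A i z ** H z))))"
    using assms(2-4) by (intro sum_weighted_trace_scaleR) (auto simp: admissible_perturbation_def)
  also have "\<dots> = 0"
    using assms(6) \<open>i \<in> {1..R}\<close> by simp
  finally show "(\<Sum>z\<in>UNIV. of_real (p z) * trace (A i z ** (c z *\<^sub>R H z))) = 0" .
qed

theorem theorem1:
  fixes p :: "'z::finite \<Rightarrow> real"
    and A :: "nat \<Rightarrow> 'z \<Rightarrow> complex^'n^'n"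
    and b :: "nat \<Rightarrow> real"
    and R :: nat
    and \<rho> :: "'z \<Rightarrow> complex^'n^'n"
  assumes p_nonneg: "\<And>z. 0 \<le> p z"
    and p_sum: "(\<Sum>z\<in>UNIV. p z) = 1"
    and A_herm: "\<And>i z. i \<in> {1..R} \<Longrightarrow> hermitian (A i z)"
    and ext: "extreme_pt (feasible p A b R) \<rho>"
  shows "card {z. \<not> pure_state (\<rho> z)} \<le> R"
proof (rule ccontr)
  define N where "N = {z. \<not> pure_state (\<rho> z)}"
  assume "\<not> ?thesis"
  then have "R < card N"
    by (simp add: N_def)
  have \<rho>K: "\<rho> \<in> feasible p A b R"
    using ext by (simp add: extreme_pt_def)
  then have dens: "density (\<rho> z)" for z
    by (simp add: feasible_def)
  have "\<exists>H. admissible_perturbation (\<rho> z) H \<and> (H \<noteq> 0 \<longleftrightarrow> z \<in> N)" for z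
    using nonpure_density_admissible_perturbation[OF dens] admissible_perturbation_zero dens
    by (cases "z \<in> N") (auto simp: N_def density_def)
  then obtain H where
    H: "\<And>z. admissible_perturbation (\<rho> z) (H z)" "\<And>z. H z \<noteq> 0 \<longleftrightarrow> z \<in> N"
    by metis
  obtain c where c: "\<exists>z\<in>N. c z \<noteq> 0" "\<forall>z. \<bar>c z\<bar> \<le> 1"
    "\<forall>i\<in>{1..R}. (\<Sum>z\<in>N. c z * (p z * Re (trace (A i z ** H z)))) = 0"
    using homogeneous_system_bounded_solution[OF finite \<open>R < card N\<close>,
        where g = "\<lambda>z i. p z * Re (trace (A i z ** H z))"] by blast
  have "(\<lambda>z. \<rho> z + c z *\<^sub>R H z) \<in> feasible p A b R"
    by (rule feasible_add_scaled_perturbations[where N = N, OF \<rho>K A_herm H(1)])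
      (use c H(2) in auto)
  moreover have "(\<lambda>z. \<rho> z + (- c z) *\<^sub>R H z) \<in> feasible p A b R"
    by (rule feasible_add_scaled_perturbations[where N = N, OF \<rho>K A_herm H(1)])
      (use c H(2) in \<open>auto simp: sum_negf\<close>)
  ultimately have "c z *\<^sub>R H z = 0" for z
    by (intro extreme_pt_symmetric_perturbation[OF ext]) simp_all
  with c(1) H(2) show False
    by auto
qed

end
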